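(* Let $D$ be a $3$-dicritical digraph and $uv$ an arc of $D$. Then $D$ admits a $uv$-colouring.
   Context: A $2$-dicolouring of a digraph is a map to $\{1,2\}$ such that each colour class induces an acyclic subdigraph (digons count as directed cycles). $D$ is $3$-dicritical if $D$ has no $2$-dicolouring but every proper subdigraph has one. For an arc $uv$ of $D$, a $uv$-colouring of $D$ is a map $\phi:V(D)\to\{1,2\}$ such that: $\phi$ is a $2$-dicolouring of $D\setminus uv$ (the digraph $D$ with the arc $uv$ deleted); $\phi(u)=\phi(v)=1$; and $D\setminus uv$ contains no directed path from $u$ to $v$ all of whose vertices have the same colour under $\phi$. *)

theory Defs
  imports Main
begin

text \<open>A (finite, loopless) digraph is given by a vertex set V and an arc set
A of ordered pairs; digons (both (x,y) and (y,x)) are allowed, parallel arcs are not.\<close>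

definition digraph :: "'a set \<Rightarrow> ('a \<times> 'a) set \<Rightarrow> bool" where
  "digraph V A \<longleftrightarrow> finite V \<and> A \<subseteq> V \<times> V \<and> (\<forall>x. (x, x) \<notin> A)"

definition induced_arcs :: "('a \<times> 'a) set \<Rightarrow> 'a set \<Rightarrow> ('a \<times> 'a) set" where
  "induced_arcs A S = A \<inter> (S \<times> S)"

definition colour_class :: "'a set \<Rightarrow> ('a \<Rightarrow> nat) \<Rightarrow> nat \<Rightarrow> 'a set" where
  "colour_class V \<phi> c = {x \<in> V. \<phi> x = c}"

text \<open>A 2-dicolouring: a map V to {1,2} such that each colour class induces an
acyclic subdigraph (a digon is a directed cycle, since acyclic means no x with (x,x) in the transitive closure).\<close>
definition two_dicolouring :: "'a set \<Rightarrow> ('a \<times> 'a) set \<Rightarrow> ('a \<Rightarrow> nat) \<Rightarrow> bool" where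
  "two_dicolouring V A \<phi> \<longleftrightarrow>
     (\<forall>x\<in>V. \<phi> x \<in> {1, 2}) \<and>
     (\<forall>c\<in>{1::nat, 2}. acyclic (induced_arcs A (colour_class V \<phi> c)))"

definition two_dicolourable :: "'a set \<Rightarrow> ('a \<times> 'a) set \<Rightarrow> bool" where
  "two_dicolourable V A \<longleftrightarrow> (\<exists>\<phi>. two_dicolouring V A \<phi>)"

definition subdigraph :: "'a set \<Rightarrow> ('a \<times> 'a) set \<Rightarrow> 'a set \<Rightarrow> ('a \<times> 'a) set \<Rightarrow> bool" where
  "subdigraph V' A' V A \<longleftrightarrow> V' \<subseteq> V \<and> A' \<subseteq> A \<and> A' \<subseteq> V' \<times> V'"

definition proper_subdigraph :: "'a set \<Rightarrow> ('a \<times> 'a) set \<Rightarrow> 'a set \<Rightarrow> ('a \<times> 'a) set \<Rightarrow> bool" where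
  "proper_subdigraph V' A' V A \<longleftrightarrow> subdigraph V' A' V A \<and> (V', A') \<noteq> (V, A)"

definition dicritical3 :: "'a set \<Rightarrow> ('a \<times> 'a) set \<Rightarrow> bool" where
  "dicritical3 V A \<longleftrightarrow> digraph V A \<and> \<not> two_dicolourable V A \<and>
     (\<forall>V' A'. proper_subdigraph V' A' V A \<longrightarrow> two_dicolourable V' A')"

text \<open>Since u has colour 1,
such a path would lie in colour class 1; as u \<noteq> v (no loops), such a path has at least one arc.\<close>
definition uv_colouring :: "'a set \<Rightarrow> ('a \<times> 'a) set \<Rightarrow> 'a \<Rightarrow> 'a \<Rightarrow> ('a \<Rightarrow> nat) \<Rightarrow> bool" where
  "uv_colouring V A u v \<phi> \<longleftrightarrow>
     two_dicolouring V (A - {(u, v)}) \<phi> \<and> \<phi> u = 1 \<and> \<phi> v = 1 \<and>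
     (u, v) \<notin> (induced_arcs (A - {(u, v)}) (colour_class V \<phi> 1))\<^sup>+"

end

theory Submission
  imports Defs
begin

text \<open>Deleting uv from the 3-dicritical digraph D leaves a 2-dicolourable digraph; take
any 2-dicolouring. It is not a 2-dicolouring of D, so putting uv back closes a monochromatic
directed cycle, which must pass through uv: u and v share a colour c, and D minus uv has a
directed v-u path in colour c. Since colour class c is acyclic in D minus uv, it then contains
no u-v path. Renaming c to 1 gives a uv-colouring.\<close>

lemma induced_arcs_remove_arc:
  assumes "(u, v) \<in> A" "u \<in> S" "v \<in> S"
  shows "induced_arcs A S = insert (u, v) (induced_arcs (A - {(u, v)}) S)"
  using assms unfolding induced_arcs_def by auto

lemma induced_arcs_remove_outside_arc:
  assumes "u \<notin> S \<or> v \<notin> S"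
  shows "induced_arcs (A - {(u, v)}) S = induced_arcs A S"
  using assms unfolding induced_arcs_def by auto

lemma acyclic_rtrancl_not_trancl_converse:
  assumes "acyclic R" "(v, u) \<in> R\<^sup>*"
  shows "(u, v) \<notin> R\<^sup>+"
  using assms unfolding acyclic_def by (meson trancl_rtrancl_trancl)

lemma two_dicolouring_swap_colours:
  assumes "two_dicolouring V A \<phi>" "c \<in> {1, 2}"
  obtains \<psi> where "two_dicolouring V A \<psi>" "colour_class V \<psi> 1 = colour_class V \<phi> c"
proof (cases "c = 1")
  case True
  then show ?thesis using assms that by blast
next
  case False
  define \<psi> where "\<psi> x = 3 - \<phi> x" for x
  have "\<forall>x\<in>V. \<phi> x \<in> {1, 2}"
    using assms(1) unfolding two_dicolouring_def by blast
  then have "colour_class V \<psi> 1 = colour_class V \<phi> 2" "colour_class V \<psi> 2 = colour_class V \<phi> 1"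
    unfolding colour_class_def \<psi>_def by auto
  moreover from this have "two_dicolouring V A \<psi>"
    using assms(1) unfolding two_dicolouring_def \<psi>_def by auto
  ultimately show ?thesis
    using False assms(2) that by auto
qed

lemma dicritical3_delete_arc_two_dicolourable:
  assumes "dicritical3 V A" "(u, v) \<in> A"
  shows "two_dicolourable V (A - {(u, v)})"
proof -
  have "proper_subdigraph V (A - {(u, v)}) V A"
    using assms unfolding dicritical3_def digraph_def proper_subdigraph_def subdigraph_def
    by auto
  then show ?thesis
    using assms(1) unfolding dicritical3_def by blast
qed

lemma two_dicolouring_add_arc_monochromatic_cycle:
  assumes "(u, v) \<in> A" "two_dicolouring V (A - {(u, v)}) \<phi>" "\<not> two_dicolouring V A \<phi>"
  obtains c where "c \<in> {1, 2}" "u \<in> colour_class V \<phi> c" "v \<in> colour_class V \<phi> c"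
    "(v, u) \<in> (induced_arcs (A - {(u, v)}) (colour_class V \<phi> c))\<^sup>*"
proof -
  obtain c where c: "c \<in> {1, 2}" and cyclic: "\<not> acyclic (induced_arcs A (colour_class V \<phi> c))"
    using assms(2,3) unfolding two_dicolouring_def by blast
  let ?R = "induced_arcs (A - {(u, v)}) (colour_class V \<phi> c)"
  have acyclic: "acyclic ?R"
    using assms(2) c unfolding two_dicolouring_def by blast
  have uv: "u \<in> colour_class V \<phi> c \<and> v \<in> colour_class V \<phi> c"
  proof (rule ccontr)
    assume "\<not> ?thesis"
    then have "?R = induced_arcs A (colour_class V \<phi> c)"
      by (simp add: induced_arcs_remove_outside_arc)
    with cyclic acyclic show False by simp
  qed
  then have "\<not> acyclic (insert (u, v) ?R)"
    using cyclic assms(1) induced_arcs_remove_arc by metis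
  with acyclic have "(v, u) \<in> ?R\<^sup>*"
    by simp
  with c uv show ?thesis
    using that by blast
qed

theorem lemma13:
  assumes "dicritical3 V A" and "(u, v) \<in> A"
  shows "\<exists>\<phi>. uv_colouring V A u v \<phi>"
proof -
  obtain \<phi> where \<phi>: "two_dicolouring V (A - {(u, v)}) \<phi>"
    using dicritical3_delete_arc_two_dicolourable[OF assms] unfolding two_dicolourable_def by blast
  moreover have "\<not> two_dicolouring V A \<phi>"
    using assms(1) unfolding dicritical3_def two_dicolourable_def by blast
  ultimately obtain c where c: "c \<in> {1, 2}"
    and uv: "u \<in> colour_class V \<phi> c" "v \<in> colour_class V \<phi> c"
    and path_vu: "(v, u) \<in> (induced_arcs (A - {(u, v)}) (colour_class V \<phi> c))\<^sup>*"
    by (rule two_dicolouring_add_arc_monochromatic_cycle[OF assms(2)])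
  have "acyclic (induced_arcs (A - {(u, v)}) (colour_class V \<phi> c))"
    using \<phi> c unfolding two_dicolouring_def by blast
  then have "(u, v) \<notin> (induced_arcs (A - {(u, v)}) (colour_class V \<phi> c))\<^sup>+"
    using path_vu by (rule acyclic_rtrancl_not_trancl_converse)
  moreover obtain \<psi> where "two_dicolouring V (A - {(u, v)}) \<psi>"
    and "colour_class V \<psi> 1 = colour_class V \<phi> c"
    using two_dicolouring_swap_colours[OF \<phi> c] by blast
  ultimately have "uv_colouring V A u v \<psi>"
    using uv unfolding uv_colouring_def colour_class_def by auto
  then show ?thesis by blast
qed

end
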